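(* Each of $r_0$ and $r_1$ has a unique fixed point in $[0,1]$, denoted $\eta_0$ and $\eta_1$ respectively, and each is a global attractor of the corresponding dynamical system on $[0,1]$: $r_i^k(z)\to\eta_i$ as $k\to\infty$ for every $z\in[0,1]$, $i\in\{0,1\}$.
   Context: Parameters $a,b,p,q\in(0,1)$ with $a+b\ne1$. $\alpha_0(z)=(1-p)(a+b-1)z+1-b+pb$, $\alpha_1(z)=(1-q)(1-a-b)z+b+q-bq$, $r_0(z)=\frac{(a+b-1)z+1-b}{\alpha_0(z)}$, $r_1(z)=\frac{q(a+b-1)z+q-qb}{\alpha_1(z)}$; these map $[0,1]$ into $[0,1]$. *)

theory Defs
  imports Complex_Main
begin

definition alpha0 :: "real \<Rightarrow> real \<Rightarrow> real \<Rightarrow> real \<Rightarrow> real \<Rightarrow> real" where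
  "alpha0 a b p q z = (1 - p) * (a + b - 1) * z + 1 - b + p * b"

definition alpha1 :: "real \<Rightarrow> real \<Rightarrow> real \<Rightarrow> real \<Rightarrow> real \<Rightarrow> real" where
  "alpha1 a b p q z = (1 - q) * (1 - a - b) * z + b + q - b * q"

definition r0 :: "real \<Rightarrow> real \<Rightarrow> real \<Rightarrow> real \<Rightarrow> real \<Rightarrow> real" where
  "r0 a b p q z = ((a + b - 1) * z + 1 - b) / alpha0 a b p q z"

definition r1 :: "real \<Rightarrow> real \<Rightarrow> real \<Rightarrow> real \<Rightarrow> real \<Rightarrow> real" where
  "r1 a b p q z = (q * (a + b - 1) * z + q - q * b) / alpha1 a b p q z"

end

theory Submission
  imports Defs
begin

text \<open>
  Both maps are Moebius transformations \<open>x \<mapsto> (A x + B) / (C x + D)\<close> whose numerator and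
  denominator are positive on \<open>[0, 1]\<close> with the numerator smaller, so they map \<open>[0, 1]\<close>
  into \<open>(0, 1)\<close>. The fixed points are the roots of the quadratic \<open>x (C x + D) - (A x + B)\<close>,
  which is negative at 0 and positive at 1; two roots in \<open>[0, 1]\<close> would force it to have the
  same sign at both ends, so there is exactly one, \<open>\<eta>\<close>. Its multiplier
  \<open>\<mu> = (A D - B C) / (C \<eta> + D)\<^sup>2\<close> satisfies \<open>|\<mu>| < 1\<close>. The change of variable
  \<open>v = 1 / (x - \<eta>)\<close> conjugates the map to the affine map \<open>v \<mapsto> v / \<mu> + c\<close>, whose non-constant
  orbits escape to infinity, i.e. \<open>x - \<eta> \<rightarrow> 0\<close>.
\<close>

lemma convex_combination_pos:
  fixes u v x :: real
  assumes "0 < u" "0 < v" "x \<in> {0..1}"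
  shows "0 < (1 - x) * u + x * v"
proof (cases "x = 1")
  case False
  with assms have "0 < (1 - x) * u" "0 \<le> x * v" by auto
  then show ?thesis by linarith
qed (use assms in simp)

lemma affine_recurrence_inverse_tendsto_zero:
  fixes v :: "nat \<Rightarrow> real"
  assumes rec: "\<And>n. v (Suc n) = l * v n + c" and l: "1 < \<bar>l\<bar>" and moves: "v 1 \<noteq> v 0"
  shows "(\<lambda>n. inverse (v n)) \<longlonglongrightarrow> 0"
proof -
  define K where "K = c / (1 - l)"
  define w where "w = v 0 - K"
  define \<mu> where "\<mu> = inverse l"
  have "l \<noteq> 1" "l \<noteq> 0" using l by auto
  then have K_fixed: "l * K + c = K" by (simp add: K_def field_simps)
  have closed_form: "v n = K + l ^ n * w" for n
  proof (induction n)
    case (Suc n)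
    have "v (Suc n) = (l * K + c) + l ^ Suc n * w" using rec[of n] Suc by (simp add: algebra_simps)
    then show ?case using K_fixed by simp
  qed (simp add: w_def)
  have "w \<noteq> 0" using moves closed_form[of 0] closed_form[of 1] by auto
  have "inverse (v n) = \<mu> ^ n / (K * \<mu> ^ n + w)" for n
  proof -
    have "\<mu> ^ n * l ^ n = 1" using \<open>l \<noteq> 0\<close> by (simp add: \<mu>_def flip: power_mult_distrib)
    then have "\<mu> ^ n * v n = K * \<mu> ^ n + w" by (simp add: closed_form algebra_simps)
    have "\<mu> ^ n \<noteq> 0" using \<open>l \<noteq> 0\<close> by (simp add: \<mu>_def)
    then have "inverse (v n) = \<mu> ^ n / (\<mu> ^ n * v n)" by (cases "v n = 0") (simp_all add: inverse_eq_divide)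
    also have "\<dots> = \<mu> ^ n / (K * \<mu> ^ n + w)" by (simp only: \<open>\<mu> ^ n * v n = K * \<mu> ^ n + w\<close>)
    finally show ?thesis .
  qed
  moreover have "(\<lambda>n. \<mu> ^ n / (K * \<mu> ^ n + w)) \<longlonglongrightarrow> 0 / (K * 0 + w)"
    using l \<open>w \<noteq> 0\<close>
    by (intro tendsto_intros LIMSEQ_abs_realpow_zero2) (auto simp: \<mu>_def abs_inverse inverse_less_1_iff)
  ultimately show ?thesis by simp
qed

definition moebius :: "real \<Rightarrow> real \<Rightarrow> real \<Rightarrow> real \<Rightarrow> real \<Rightarrow> real" where
  "moebius A B C D x = (A * x + B) / (C * x + D)"

locale moebius_self_map =
  fixes A B C D :: real
  assumes B_pos: "0 < B" and B_less_D: "B < D"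
    and numerator_at_one_pos: "0 < A + B" and numerator_less_denominator_at_one: "A + B < C + D"
    and det_nonzero: "A * D - B * C \<noteq> 0"
begin

abbreviation f :: "real \<Rightarrow> real" where
  "f \<equiv> moebius A B C D"

lemma denominator_pos: "x \<in> {0..1} \<Longrightarrow> 0 < C * x + D"
  using convex_combination_pos[of D "C + D" x] B_pos B_less_D numerator_at_one_pos
    numerator_less_denominator_at_one
  by (simp add: algebra_simps)

lemma maps_into_unit_interval:
  assumes "x \<in> {0..1}"
  shows "f x \<in> {0..1}"
proof -
  have "0 < A * x + B"
    using convex_combination_pos[of B "A + B" x] assms B_pos numerator_at_one_pos
    by (simp add: algebra_simps)
  moreover have "A * x + B < C * x + D"
    using convex_combination_pos[of "D - B" "C + D - (A + B)" x] assms B_less_D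
      numerator_less_denominator_at_one
    by (simp add: algebra_simps)
  ultimately show ?thesis using denominator_pos[OF assms] by (simp add: moebius_def)
qed

lemma funpow_in_unit_interval: "z \<in> {0..1} \<Longrightarrow> (f ^^ n) z \<in> {0..1}"
  by (induction n) (use maps_into_unit_interval in auto)

lemma fixed_point_iff: "x \<in> {0..1} \<Longrightarrow> f x = x \<longleftrightarrow> x * (C * x + D) = A * x + B"
  using denominator_pos[of x] by (auto simp: moebius_def field_simps)

lemma fixed_point_exists: "\<exists>\<eta> \<in> {0..1}. f \<eta> = \<eta>"
proof -
  have "\<exists>x. 0 \<le> x \<and> x \<le> 1 \<and> x * (C * x + D) - (A * x + B) = 0"
    using B_pos numerator_less_denominator_at_one
    by (intro IVT') (auto simp: algebra_simps intro!: continuous_intros)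
  then show ?thesis using fixed_point_iff by auto
qed

lemma fixed_point_unique:
  assumes "x \<in> {0..1}" "f x = x" "y \<in> {0..1}" "f y = y"
  shows "x = y"
proof (rule ccontr)
  assume "x \<noteq> y"
  have x: "x * (C * x + D) = A * x + B" and y: "y * (C * y + D) = A * y + B"
    using assms fixed_point_iff by auto
  \<comment> \<open>Vieta: the quadratic \<open>C t\<^sup>2 + (D - A) t - B\<close> equals \<open>C (t - x) (t - y)\<close>.\<close>
  have "(x - y) * (C * (x + y) + D - A) = 0" using x y by (simp add: algebra_simps)
  then have sum: "C * (x + y) = A - D" using \<open>x \<noteq> y\<close> by simp
  have "C * (x * y) = x * (C * (x + y)) - x * (C * x + D) + D * x" by (simp add: algebra_simps)
  also have "\<dots> = x * (A - D) - (A * x + B) + D * x" by (simp only: sum x)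
  finally have at_zero: "- B = C * (x * y)" by (simp add: algebra_simps)
  have at_one: "C + D - A - B = C * ((1 - x) * (1 - y))"
    using at_zero sum by (simp add: algebra_simps)
  have "0 \<le> C * C * ((x * y) * ((1 - x) * (1 - y)))" using assms(1,3) by simp
  also have "\<dots> = - B * (C + D - A - B)" by (simp add: at_zero at_one)
  finally show False using B_pos numerator_less_denominator_at_one by (simp add: mult_le_0_iff)
qed

end

locale moebius_self_map_fixed_point = moebius_self_map +
  fixes \<eta> :: real
  assumes fixed_in: "\<eta> \<in> {0..1}" and fixed: "f \<eta> = \<eta>"
begin

lemma fixed_point_equation: "\<eta> * (C * \<eta> + D) = A * \<eta> + B"
  using fixed fixed_in fixed_point_iff by blast

lemma multiplier_abs_less_one: "\<bar>A * D - B * C\<bar> < (C * \<eta> + D)\<^sup>2"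
proof -
  define E where "E = C * \<eta> + D"
  define s where "s = 2 * C * \<eta> + D - A"
  have "0 < E" using denominator_pos[OF fixed_in] by (simp add: E_def)
  \<comment> \<open>\<open>s\<close> is the slope at \<open>\<eta>\<close> of the quadratic, which is negative at 0 and positive at 1.\<close>
  have "0 < \<eta> * (s - C * \<eta>)"
    using fixed_point_equation B_pos by (simp add: s_def algebra_simps)
  then have "C * \<eta> < s" using fixed_in by (simp add: zero_less_mult_iff)
  moreover have "0 < (1 - \<eta>) * (C * (1 - \<eta>) + s)"
    using fixed_point_equation numerator_less_denominator_at_one by (simp add: s_def algebra_simps)
  then have "- C * (1 - \<eta>) < s" using fixed_in by (simp add: zero_less_mult_iff)
  moreover have "0 \<le> C * \<eta> \<or> 0 \<le> - C * (1 - \<eta>)"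
  proof (cases "0 \<le> C")
    case False
    then show ?thesis using fixed_in by (intro disjI2 mult_nonneg_nonneg) auto
  qed (use fixed_in in simp)
  ultimately have "0 < s" by linarith
  have "E\<^sup>2 - (A * D - B * C) - E * s = - C * (\<eta> * (C * \<eta> + D) - (A * \<eta> + B))"
    by (simp add: E_def s_def algebra_simps power2_eq_square)
  then have "E\<^sup>2 - (A * D - B * C) = E * s" using fixed_point_equation by simp
  moreover have "E\<^sup>2 + (A * D - B * C) - E * (A + D) = C * (\<eta> * (C * \<eta> + D) - (A * \<eta> + B))"
    by (simp add: E_def algebra_simps power2_eq_square)
  then have "E\<^sup>2 + (A * D - B * C) = E * (A + D)" using fixed_point_equation by simp
  moreover have "0 < E * s" "0 < E * (A + D)"
    using \<open>0 < E\<close> \<open>0 < s\<close> numerator_at_one_pos B_less_D by simp_all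
  ultimately show ?thesis unfolding E_def[symmetric] by linarith
qed

lemma sub_fixed:
  assumes "x \<in> {0..1}"
  shows "f x - \<eta> = (A * D - B * C) * (x - \<eta>) / ((C * x + D) * (C * \<eta> + D))"
proof -
  have "C * x + D \<noteq> 0" "C * \<eta> + D \<noteq> 0"
    using denominator_pos[OF assms] denominator_pos[OF fixed_in] by auto
  have "f x - \<eta> = f x - f \<eta>" using fixed by simp
  also have "\<dots> = (A * D - B * C) * (x - \<eta>) / ((C * x + D) * (C * \<eta> + D))"
    using \<open>C * x + D \<noteq> 0\<close> \<open>C * \<eta> + D \<noteq> 0\<close>
    by (simp add: moebius_def field_simps)
  finally show ?thesis .
qed

lemma inverse_sub_fixed:
  assumes "x \<in> {0..1}" "x \<noteq> \<eta>"
  shows "inverse (f x - \<eta>) =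
    (C * \<eta> + D)\<^sup>2 / (A * D - B * C) * inverse (x - \<eta>) + C * (C * \<eta> + D) / (A * D - B * C)"
proof -
  have partial_fractions: "(e + c * d) * e / (k * d) = e\<^sup>2 / k * inverse d + c * e / k" if "d \<noteq> 0" "k \<noteq> 0"
    for e c d k :: real
    using that by (simp add: field_simps power2_eq_square)
  have "inverse (f x - \<eta>) = (C * x + D) * (C * \<eta> + D) / ((A * D - B * C) * (x - \<eta>))"
    by (simp add: sub_fixed[OF assms(1)])
  also have "C * x + D = (C * \<eta> + D) + C * (x - \<eta>)" by (simp add: algebra_simps)
  finally show ?thesis using partial_fractions assms(2) det_nonzero by simp
qed

lemma funpow_tendsto_fixed_point:
  assumes z: "z \<in> {0..1}"
  shows "(\<lambda>k. (f ^^ k) z) \<longlonglongrightarrow> \<eta>"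
proof (cases "z = \<eta>")
  case True
  then have "(f ^^ k) z = \<eta>" for k using fixed by (induction k) simp_all
  then show ?thesis by simp
next
  case False
  define u where "u n = (f ^^ n) z - \<eta>" for n
  have "u n \<noteq> 0" for n
  proof (induction n)
    case (Suc n)
    then show ?case
      using sub_fixed[OF funpow_in_unit_interval[OF z, of n]] det_nonzero
        denominator_pos[OF funpow_in_unit_interval[OF z, of n]] denominator_pos[OF fixed_in]
      by (simp add: u_def)
  qed (use False in \<open>simp add: u_def\<close>)
  then have "inverse (u (Suc n)) =
      (C * \<eta> + D)\<^sup>2 / (A * D - B * C) * inverse (u n) + C * (C * \<eta> + D) / (A * D - B * C)" for n
    using inverse_sub_fixed[OF funpow_in_unit_interval[OF z, of n]] by (simp add: u_def)
  moreover have "1 < \<bar>(C * \<eta> + D)\<^sup>2 / (A * D - B * C)\<bar>"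
    using multiplier_abs_less_one det_nonzero by (simp add: abs_div_pos)
  moreover have "inverse (u 1) \<noteq> inverse (u 0)"
    using fixed_point_unique[OF z _ fixed_in fixed] maps_into_unit_interval[OF z] False
    by (auto simp: u_def)
  ultimately have "(\<lambda>n. inverse (inverse (u n))) \<longlonglongrightarrow> 0"
    by (rule affine_recurrence_inverse_tendsto_zero)
  then have "(\<lambda>n. u n + \<eta>) \<longlonglongrightarrow> 0 + \<eta>" by (intro tendsto_add) simp_all
  then show ?thesis by (simp add: u_def)
qed

end

lemma (in moebius_self_map) unique_attracting_fixed_point:
  "\<exists>\<eta>. (\<forall>x \<in> {0..1}. f x = x \<longleftrightarrow> x = \<eta>) \<and> \<eta> \<in> {0..1} \<and>
     (\<forall>z \<in> {0..1}. (\<lambda>k. (f ^^ k) z) \<longlonglongrightarrow> \<eta>)"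
proof -
  obtain \<eta> where "\<eta> \<in> {0..1}" "f \<eta> = \<eta>" using fixed_point_exists by blast
  then interpret moebius_self_map_fixed_point A B C D \<eta> by unfold_locales
  show ?thesis
    using fixed_in fixed fixed_point_unique funpow_tendsto_fixed_point by metis
qed

theorem lemma2p31:
  fixes a b p q :: real
  assumes "0 < a" "a < 1" "0 < b" "b < 1" "0 < p" "p < 1" "0 < q" "q < 1"
    and "a + b \<noteq> 1"
  shows "\<forall>r \<in> {r0 a b p q, r1 a b p q}.
           \<exists>\<eta>. (\<forall>x \<in> {0..1}. r x = x \<longleftrightarrow> x = \<eta>) \<and> \<eta> \<in> {0..1} \<and>
             (\<forall>z \<in> {0..1}. (\<lambda>k. (r ^^ k) z) \<longlonglongrightarrow> \<eta>)"
proof -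
  have det0: "(a + b - 1) * p \<noteq> 0" and det1: "(a + b - 1) * q \<noteq> 0" using assms by auto
  have "r0 a b p q = moebius (a + b - 1) (1 - b) ((1 - p) * (a + b - 1)) (1 - b + p * b)"
    by (simp add: fun_eq_iff r0_def alpha0_def moebius_def algebra_simps)
  moreover have "moebius_self_map (a + b - 1) (1 - b) ((1 - p) * (a + b - 1)) (1 - b + p * b)"
    using assms det0 by unfold_locales (auto simp: algebra_simps)
  moreover have "r1 a b p q = moebius (q * (a + b - 1)) (q * (1 - b)) (- (1 - q) * (a + b - 1)) (b + q - b * q)"
    by (simp add: fun_eq_iff r1_def alpha1_def moebius_def algebra_simps)
  moreover have "moebius_self_map (q * (a + b - 1)) (q * (1 - b)) (- (1 - q) * (a + b - 1)) (b + q - b * q)"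
    using assms det1 by unfold_locales (auto simp: algebra_simps)
  ultimately show ?thesis using moebius_self_map.unique_attracting_fixed_point by auto
qed

end
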